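(* Let $P\subset\mathbb R^n$ be an $n$-dimensional strongly monotypic polytope, and let $X_1,\dots,X_k$ be a skeleton of its set of normals $X=N(P)$. Then for some sufficiently small $\epsilon>0$, $P$ can be covered by at most $|X_1|\cdot|X_2|\cdots|X_k|$ translates of $(1-\epsilon)P$. In particular, since $|X_1|\cdots|X_k|\le 2^n$, $P$ can be covered by at most $2^n$ translates of $(1-\epsilon)P$.
   Context: $N(P)$ is the set of outer unit normals of the facets of $P$. $\mathcal A(P)$ is the arrangement of hyperplanes containing the facets of $P$; $P$ is strongly monotypic if every polytope $Q$ with $N(Q)=N(P)$ has $\mathcal A(Q)$ combinatorially equivalent to $\mathcal A(P)$. A skeleton of a finite set $X\subset\mathbb R^n\setminus\{0\}$ is a collection of pairwise disjoint subsets $X_1,\dots,X_k\subseteq X$ such that each $X_i$ is the vertex set of a simplex whose relative interior contains $0$, and $\mathbb R^n=\operatorname{span}X_1\oplus\cdots\oplus\operatorname{span}X_k$. *)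

theory Defs
  imports "HOL-Analysis.Analysis"
begin

definition facet_normals :: "'a::euclidean_space set \<Rightarrow> 'a set" where
  "facet_normals P = {u. norm u = 1 \<and>
      (\<exists>F b. F facet_of P \<and> P \<subseteq> {x. u \<bullet> x \<le> b} \<and> F = P \<inter> {x. u \<bullet> x = b})}"

definition support_fn :: "'a::euclidean_space set \<Rightarrow> 'a \<Rightarrow> real" where
  "support_fn P u = Sup ((\<lambda>x. u \<bullet> x) ` P)"

text \<open>Combinatorial type of the facet-hyperplane arrangement A(P): the set of sign vectors
  (covectors) of all points of space w.r.t. the hyperplanes, labelled by their outer normals.\<close>
definition arrangement_covectors :: "'a::euclidean_space set \<Rightarrow> ('a \<Rightarrow> real) set" where
  "arrangement_covectors P =
     {(\<lambda>u. if u \<in> facet_normals P then sgn (u \<bullet> x - support_fn P u) else 0) | x. True}"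

definition strongly_monotypic :: "'a::euclidean_space set \<Rightarrow> bool" where
  "strongly_monotypic P \<longleftrightarrow>
     (\<forall>Q. polytope Q \<and> aff_dim Q = int DIM('a) \<and> facet_normals Q = facet_normals P
          \<longrightarrow> arrangement_covectors Q = arrangement_covectors P)"

definition is_skeleton :: "'a::euclidean_space set \<Rightarrow> nat \<Rightarrow> (nat \<Rightarrow> 'a set) \<Rightarrow> bool" where
  "is_skeleton X k Xs \<longleftrightarrow>
     (\<forall>i<k. Xs i \<subseteq> X) \<and>
     (\<forall>i<k. \<forall>j<k. i \<noteq> j \<longrightarrow> Xs i \<inter> Xs j = {}) \<and>
     (\<forall>i<k. finite (Xs i) \<and> Xs i \<noteq> {} \<and> \<not> affine_dependent (Xs i) \<and>
            0 \<in> rel_interior (convex hull (Xs i))) \<and>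
     (\<forall>v. \<exists>!f. (\<forall>i<k. f i \<in> span (Xs i)) \<and> (\<forall>i\<ge>k. f i = 0) \<and> v = (\<Sum>i<k. f i))"

end

theory Submission
  imports Defs
begin

text \<open>
  For a choice c of one normal from each skeleton simplex, the remaining normals B_c form a basis,
  and the apex V_c is the point on all facet hyperplanes of P with normals in B_c. The key fact is
  that every point x of P has an apex V_c lying on or beyond every facet hyperplane through x.
  Then the image of P under the homothety with centre V_c and ratio 1 - \<epsilon> contains a
  neighbourhood of x in P, uniformly in x by compactness, so the |X_1| \<dots> |X_k| homotheties cover P. Independence of B_c
  gives \<Sum> (|X_i| - 1) \<le> n, whence the bound 2^n.

  The key fact only depends on the sign vectors of points with respect to the facet hyperplanes,
  so by strong monotypicity it may be checked on an auxiliary polytope R with the same facet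
  normals, tangent to small balls around the apexes of slightly shifted hyperplanes. The
  barycentric coordinates of 0 in X_i give every point the same weighted slack over X_i, so some
  normal of each X_i has large slack at x; removing these normals yields a basis B_c whose cone
  contains the normal of every facet of R through x, which forces V_c beyond those facets.
\<close>

section \<open>Hyperplanes and halfspaces\<close>

lemma unit_normal_of_hyperplane_subset:
  fixes u u' :: "'a::euclidean_space"
  assumes u: "norm u = 1" and u': "norm u' = 1"
    and sub: "{x. u \<bullet> x = b} \<subseteq> {x. u' \<bullet> x = b'}"
  shows "u' = u \<or> u' = -u"
proof -
  have uu: "u \<bullet> u = 1" using u by (simp add: dot_square_norm)
  have base: "b *\<^sub>R u \<in> {x. u \<bullet> x = b}" using uu by simp
  have orth: "u' \<bullet> v = 0" if "u \<bullet> v = 0" for v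
  proof -
    have "b *\<^sub>R u + v \<in> {x. u \<bullet> x = b}" using uu that by (simp add: inner_add_right)
    then have "u' \<bullet> (b *\<^sub>R u + v) = b'" using sub by blast
    moreover have "u' \<bullet> (b *\<^sub>R u) = b'" using sub base by blast
    ultimately show ?thesis by (simp add: inner_add_right)
  qed
  define r where "r = u' - (u' \<bullet> u) *\<^sub>R u"
  have "u \<bullet> r = 0" unfolding r_def using uu by (simp add: inner_diff_right inner_commute)
  moreover from this have "u' \<bullet> r = 0" by (rule orth)
  ultimately have "r \<bullet> r = 0" unfolding r_def
    by (simp add: inner_diff_left inner_diff_right algebra_simps)
  then have eq: "u' = (u' \<bullet> u) *\<^sub>R u" unfolding r_def by simp
  then have "norm u' = \<bar>u' \<bullet> u\<bar>" using u by (metis norm_scaleR mult.right_neutral real_norm_def)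
  then have "u' \<bullet> u = 1 \<or> u' \<bullet> u = -1" using u' by linarith
  then show ?thesis using eq by auto
qed

lemma facet_unit_normal_unique:
  fixes S :: "'a::euclidean_space set"
  assumes full: "aff_dim S = int DIM('a)" and fac: "G facet_of S"
    and G1: "G = S \<inter> {x. u \<bullet> x = b}" and S1: "S \<subseteq> {x. u \<bullet> x \<le> b}"
    and G2: "G = S \<inter> {x. u' \<bullet> x = b'}" and S2: "S \<subseteq> {x. u' \<bullet> x \<le> b'}"
    and u: "norm u = 1" and u': "norm u' = 1"
  shows "u' = u"
proof -
  have "aff_dim G = aff_dim S - 1" using fac by (simp add: facet_of_def)
  then have "aff_dim G = int (DIM('a) - 1)" using full DIM_positive[where 'a='a] by simp
  then obtain a c where a: "a \<noteq> 0" and ah: "affine hull G = {x. a \<bullet> x = c}"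
    using aff_dim_eq_hyperplane by blast
  define a' where "a' = a /\<^sub>R norm a"
  define c' where "c' = c / norm a"
  have na: "norm a' = 1" using a by (simp add: a'_def)
  have hyp: "{x. a' \<bullet> x = c'} = {x. a \<bullet> x = c}"
    using a by (auto simp: a'_def c'_def field_simps)
  have "affine hull G \<subseteq> {x. u \<bullet> x = b}"
    using G1 by (intro hull_minimal) (auto simp: affine_hyperplane)
  then have "{x. a' \<bullet> x = c'} \<subseteq> {x. u \<bullet> x = b}" using hyp ah by simp
  then have "u = a' \<or> u = -a'" by (rule unit_normal_of_hyperplane_subset[OF na u])
  moreover have "affine hull G \<subseteq> {x. u' \<bullet> x = b'}"
    using G2 by (intro hull_minimal) (auto simp: affine_hyperplane)
  then have "{x. a' \<bullet> x = c'} \<subseteq> {x. u' \<bullet> x = b'}" using hyp ah by simp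
  then have "u' = a' \<or> u' = -a'" by (rule unit_normal_of_hyperplane_subset[OF na u'])
  ultimately have "u' = u \<or> u' = -u" by auto
  moreover have "u' \<noteq> -u"
  proof
    assume m: "u' = -u"
    obtain g where "g \<in> G" using fac by (auto simp: facet_of_def)
    then have "u \<bullet> g = b" "u' \<bullet> g = b'" using G1 G2 by auto
    then have "b' = -b" using m by simp
    then have "S \<subseteq> {x. u \<bullet> x = b}" using S1 S2 m by force
    then have "aff_dim S \<le> aff_dim {x. u \<bullet> x = b}" by (rule aff_dim_subset)
    also have "\<dots> = int (DIM('a) - 1)" using u by (intro aff_dim_hyperplane) auto
    finally show False using full DIM_positive[where 'a='a] by linarith
  qed
  ultimately show ?thesis by blast
qed

lemma facet_of_subset_eq:
  fixes S :: "'a::euclidean_space set"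
  assumes F: "F facet_of S" and G: "G facet_of S" and "F \<subseteq> G"
  shows "F = G"
proof (rule ccontr)
  assume "F \<noteq> G"
  moreover have "F face_of G"
    using face_of_face[OF facet_of_imp_face_of[OF G]] F \<open>F \<subseteq> G\<close> facet_of_imp_face_of by blast
  ultimately have "aff_dim F < aff_dim G"
    using face_of_aff_dim_lt[OF face_of_imp_convex[OF facet_of_imp_face_of[OF G]]] by blast
  then show False using F G by (simp add: facet_of_def)
qed

lemma inner_lt_1_of_unit_vectors:
  fixes u v :: "'a::real_inner"
  assumes "norm u = 1" "norm v = 1" "u \<noteq> v"
  shows "u \<bullet> v < 1"
proof -
  have "0 < norm (u - v) ^ 2" using assms by simp
  also have "norm (u - v) ^ 2 = u \<bullet> u + v \<bullet> v - 2 * (u \<bullet> v)"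
    by (simp add: power2_norm_eq_inner inner_diff_left inner_diff_right inner_commute)
  finally show ?thesis using assms by (simp add: dot_square_norm)
qed

lemma finite_pos_lower_bound:
  fixes f :: "'b \<Rightarrow> real"
  assumes "finite S" and "\<And>s. s \<in> S \<Longrightarrow> 0 < f s"
  shows "\<exists>d>0. \<forall>s\<in>S. d \<le> f s"
proof (cases "S = {}")
  case False
  then show ?thesis using assms by (intro exI[of _ "Min (f ` S)"]) auto
qed (auto intro: exI[of _ 1])

lemma ex_ball_strict_halfspaces:
  fixes q :: "'a::euclidean_space"
  assumes "finite U" and unit: "\<And>u. u \<in> U \<Longrightarrow> norm u = 1"
    and strict: "\<And>u. u \<in> U \<Longrightarrow> u \<bullet> q < b u"
  shows "\<exists>d>0. \<forall>x\<in>ball q d. \<forall>u\<in>U. u \<bullet> x < b u"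
proof -
  obtain d where d: "d > 0" "\<forall>u\<in>U. d \<le> b u - u \<bullet> q"
    using finite_pos_lower_bound[OF assms(1), of "\<lambda>u. b u - u \<bullet> q"] strict by auto
  have "u \<bullet> x < b u" if x: "x \<in> ball q d" and u: "u \<in> U" for x u
  proof -
    have "u \<bullet> (x - q) \<le> norm u * norm (x - q)" by (rule norm_cauchy_schwarz)
    also have "\<dots> < d" using x unit[OF u] by (simp add: dist_norm norm_minus_commute)
    finally show ?thesis using d u by (fastforce simp: inner_diff_right)
  qed
  then show ?thesis using d by blast
qed

lemma compact_strict_halfspace_cover_margin:
  fixes K :: "'a::euclidean_space set"
  assumes "compact K" and fin: "\<And>c. finite (U c)"
    and cover: "\<And>z. z \<in> K \<Longrightarrow> \<exists>c\<in>C. \<forall>u\<in>U c. u \<bullet> z < b c u"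
  shows "\<exists>\<eta>>0. \<forall>z\<in>K. \<exists>c\<in>C. \<forall>u\<in>U c. u \<bullet> z + \<eta> \<le> b c u"
proof -
  define S where "S p = {z. \<forall>u\<in>U (fst p). u \<bullet> z + inverse (real (Suc (snd p))) < b (fst p) u}"
    for p :: "_ \<times> nat"
  have "open (S p)" for p
  proof -
    have "S p = (\<Inter>u\<in>U (fst p). {z. u \<bullet> z < b (fst p) u - inverse (real (Suc (snd p)))})"
      by (auto simp: S_def less_diff_eq)
    then show ?thesis using fin by (auto intro!: open_INT open_halfspace_lt)
  qed
  moreover have "K \<subseteq> (\<Union>p\<in>C \<times> UNIV. S p)"
  proof
    fix z assume "z \<in> K"
    then obtain c where c: "c \<in> C" "\<forall>u\<in>U c. u \<bullet> z < b c u" using cover by blast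
    obtain d where d: "d > 0" "\<forall>u\<in>U c. d \<le> b c u - u \<bullet> z"
      using finite_pos_lower_bound[OF fin, of c "\<lambda>u. b c u - u \<bullet> z"] c(2) by auto
    obtain n where "inverse (real (Suc n)) < d" using reals_Archimedean[OF d(1)] by blast
    then have "z \<in> S (c, n)" using d(2) by (force simp: S_def)
    then show "z \<in> (\<Union>p\<in>C \<times> UNIV. S p)" using c(1) by blast
  qed
  ultimately obtain C' where C': "C' \<subseteq> C \<times> UNIV" "finite C'" "K \<subseteq> (\<Union>p\<in>C'. S p)"
    using compactE_image[OF \<open>compact K\<close>] by metis
  define \<eta> where "\<eta> = inverse (real (Suc (Max (snd ` C'))))"
  have "\<exists>c\<in>C. \<forall>u\<in>U c. u \<bullet> z + \<eta> \<le> b c u" if z: "z \<in> K" for z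
  proof -
    obtain p where p: "p \<in> C'" "z \<in> S p" using C'(3) z by blast
    have "\<eta> \<le> inverse (real (Suc (snd p)))"
      unfolding \<eta>_def using C'(2) p(1) by (auto intro!: le_imp_inverse_le Max_ge)
    then show ?thesis using p C'(1) unfolding S_def by force
  qed
  moreover have "\<eta> > 0" unfolding \<eta>_def by simp
  ultimately show ?thesis by blast
qed

lemma sum_mult_diff_const:
  fixes a b :: "'b \<Rightarrow> real"
  shows "(\<Sum>x\<in>A. a x * (b x - r)) = (\<Sum>x\<in>A. a x * b x) - r * (\<Sum>x\<in>A. a x)"
  by (simp add: right_diff_distrib sum_subtractf sum_distrib_left mult.commute)

section \<open>Centred simplices\<close>

definition centring_weights :: "'a::real_vector set \<Rightarrow> ('a \<Rightarrow> real) \<Rightarrow> bool" where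
  "centring_weights S \<alpha> \<longleftrightarrow> (\<forall>x\<in>S. 0 < \<alpha> x) \<and> sum \<alpha> S = 1 \<and> (\<Sum>x\<in>S. \<alpha> x *\<^sub>R x) = 0"

lemma centring_weights_exist:
  fixes S :: "'a::euclidean_space set"
  assumes "\<not> affine_dependent S" and "0 \<in> rel_interior (convex hull S)"
  shows "\<exists>\<alpha>. centring_weights S \<alpha>"
  using assms(2) unfolding rel_interior_convex_hull_explicit[OF assms(1)] centring_weights_def
  by auto

lemma centring_weights_inner_sum:
  assumes "centring_weights S \<alpha>"
  shows "(\<Sum>x\<in>S. \<alpha> x * (x \<bullet> p)) = 0"
proof -
  have "(\<Sum>x\<in>S. \<alpha> x * (x \<bullet> p)) = (\<Sum>x\<in>S. \<alpha> x *\<^sub>R x) \<bullet> p"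
    by (simp add: inner_sum_left)
  then show ?thesis using assms by (simp add: centring_weights_def)
qed

lemma centred_simplex_subset_span_Diff:
  fixes S :: "'a::euclidean_space set"
  assumes fin: "finite S" and w: "centring_weights S \<alpha>" and c: "c \<in> S"
  shows "S \<subseteq> span (S - {c})"
proof -
  have pos: "\<forall>x\<in>S. 0 < \<alpha> x" and s0: "(\<Sum>x\<in>S. \<alpha> x *\<^sub>R x) = 0"
    using w by (simp_all add: centring_weights_def)
  have sr: "(\<Sum>x\<in>S. \<alpha> x *\<^sub>R x) = \<alpha> c *\<^sub>R c + (\<Sum>x\<in>S - {c}. \<alpha> x *\<^sub>R x)"
    by (rule sum.remove[OF fin c])
  have "\<alpha> c *\<^sub>R c + (\<Sum>x\<in>S - {c}. \<alpha> x *\<^sub>R x) = 0"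
    using s0 sr by simp
  then have e: "\<alpha> c *\<^sub>R c = - (\<Sum>x\<in>S - {c}. \<alpha> x *\<^sub>R x)"
    by (simp add: eq_neg_iff_add_eq_0)
  have ac: "\<alpha> c \<noteq> 0" using pos c by force
  have "c = inverse (\<alpha> c) *\<^sub>R (\<alpha> c *\<^sub>R c)" using ac by simp
  also have "\<dots> = inverse (\<alpha> c) *\<^sub>R (- (\<Sum>x\<in>S - {c}. \<alpha> x *\<^sub>R x))" by (simp only: e)
  finally have ce: "c = inverse (\<alpha> c) *\<^sub>R (- (\<Sum>x\<in>S - {c}. \<alpha> x *\<^sub>R x))" .
  have "(\<Sum>x\<in>S - {c}. \<alpha> x *\<^sub>R x) \<in> span (S - {c})"
    by (intro span_sum span_scale span_base) auto
  then have "inverse (\<alpha> c) *\<^sub>R (- (\<Sum>x\<in>S - {c}. \<alpha> x *\<^sub>R x)) \<in> span (S - {c})"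
    by (intro span_scale span_neg)
  then have "c \<in> span (S - {c})" by (simp only: ce[symmetric])
  then show ?thesis by (auto intro: span_base)
qed

lemma independent_Diff_centred_vertex:
  fixes S :: "'a::euclidean_space set"
  assumes ind: "\<not> affine_dependent S" and w: "centring_weights S \<alpha>" and c: "c \<in> S"
  shows "independent (S - {c})"
proof (rule card_le_dim_spanning)
  have fin: "finite S" using aff_independent_finite[OF ind] .
  show "S - {c} \<subseteq> span S" by (auto intro: span_base)
  show "span S \<subseteq> span (S - {c})"
    using centred_simplex_subset_span_Diff[OF fin w c] by (simp add: span_minimal)
  show "finite (S - {c})" using fin by simp
  have "0 \<in> affine hull S"
    using w unfolding affine_hull_finite[OF fin] centring_weights_def by blast
  then have "aff_dim S = int (dim S)" using aff_dim_eq_dim[of 0 S] by simp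
  then show "card (S - {c}) \<le> dim (span S)"
    using aff_dim_affine_independent[OF ind] fin c by (simp add: card_Diff_singleton)
qed

text \<open>Subtract the largest multiple of the centring weights that keeps all coefficients
  nonnegative.\<close>
lemma centred_simplex_nonneg_coeffs:
  assumes fin: "finite S" and w: "centring_weights S \<alpha>" and v: "v \<in> span S"
  shows "\<exists>l c. c \<in> S \<and> l c = 0 \<and> (\<forall>y\<in>S. 0 \<le> l y) \<and> (\<Sum>y\<in>S. l y *\<^sub>R y) = v"
proof -
  have pos: "\<And>y. y \<in> S \<Longrightarrow> 0 < \<alpha> y" and s0: "(\<Sum>y\<in>S. \<alpha> y *\<^sub>R y) = 0"
    and "S \<noteq> {}"
    using w by (auto simp: centring_weights_def)
  obtain a where a: "v = (\<Sum>y\<in>S. a y *\<^sub>R y)" using v span_finite[OF fin] by blast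
  define m where "m = Min ((\<lambda>y. a y / \<alpha> y) ` S)"
  have "m \<in> (\<lambda>y. a y / \<alpha> y) ` S"
    unfolding m_def using fin \<open>S \<noteq> {}\<close> by (intro Min_in) auto
  then obtain c where c: "c \<in> S" "m = a c / \<alpha> c" by auto
  define l where "l y = a y - m * \<alpha> y" for y
  have "l c = 0" using c pos[OF c(1)] by (simp add: l_def)
  moreover have "0 \<le> l y" if y: "y \<in> S" for y
  proof -
    have "m \<le> a y / \<alpha> y" unfolding m_def using fin y by (intro Min_le) auto
    then show ?thesis using pos[OF y] by (simp add: l_def pos_le_divide_eq)
  qed
  moreover have "(\<Sum>y\<in>S. l y *\<^sub>R y) = (\<Sum>y\<in>S. a y *\<^sub>R y) - m *\<^sub>R (\<Sum>y\<in>S. \<alpha> y *\<^sub>R y)"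
    unfolding l_def by (simp add: scaleR_diff_left sum_subtractf scaleR_sum_right)
  ultimately show ?thesis using c(1) s0 a by auto
qed

lemma centred_simplex_removed_vertex_le:
  fixes S :: "'a::real_inner set"
  assumes fin: "finite S" and w: "centring_weights S \<alpha>" and c: "c \<in> S"
    and others: "\<And>x. x \<in> S - {c} \<Longrightarrow> x \<bullet> p = h x - r"
    and r: "r \<le> (\<Sum>x\<in>S. \<alpha> x * h x)"
  shows "c \<bullet> p \<le> h c - r"
proof -
  have pos: "0 < \<alpha> c" and s1: "sum \<alpha> S = 1" using w c by (auto simp: centring_weights_def)
  have "0 = \<alpha> c * (c \<bullet> p) + (\<Sum>x\<in>S - {c}. \<alpha> x * (x \<bullet> p))"
    using centring_weights_inner_sum[OF w, of p] sum.remove[OF fin c, of "\<lambda>x. \<alpha> x * (x \<bullet> p)"]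
    by simp
  moreover have "(\<Sum>x\<in>S - {c}. \<alpha> x * (x \<bullet> p)) = (\<Sum>x\<in>S - {c}. \<alpha> x * h x) - r * (\<Sum>x\<in>S - {c}. \<alpha> x)"
    unfolding sum_mult_diff_const[symmetric] by (rule sum.cong) (simp_all add: others)
  moreover have "(\<Sum>x\<in>S - {c}. \<alpha> x * h x) = (\<Sum>x\<in>S. \<alpha> x * h x) - \<alpha> c * h c"
    "(\<Sum>x\<in>S - {c}. \<alpha> x) = 1 - \<alpha> c"
    using s1 by (simp_all add: sum_diff1 fin c)
  ultimately have "\<alpha> c * (c \<bullet> p) \<le> \<alpha> c * (h c - r)"
    using r by (simp add: algebra_simps)
  then show ?thesis using pos by simp
qed

lemma centred_simplex_other_vertex:
  assumes w: "centring_weights S \<alpha>" and "0 \<notin> S" and y: "y \<in> S"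
  shows "\<exists>y'\<in>S. y' \<noteq> y"
proof (rule ccontr)
  assume "\<not> (\<exists>y'\<in>S. y' \<noteq> y)"
  then have "S = {y}" using y by blast
  then have "y = 0" using w by (auto simp: centring_weights_def)
  then show False using assms y by simp
qed

section \<open>Facet normals\<close>

lemma support_fn_eqI:
  assumes "z \<in> S" "u \<bullet> z = b" "\<And>x. x \<in> S \<Longrightarrow> u \<bullet> x \<le> b"
  shows "support_fn S u = b"
  unfolding support_fn_def by (rule cSup_eq_maximum) (use assms in auto)

lemma facet_normalsD:
  assumes "u \<in> facet_normals S"
  shows "norm u = 1" "\<And>z. z \<in> S \<Longrightarrow> u \<bullet> z \<le> support_fn S u"
    "\<exists>z\<in>S. u \<bullet> z = support_fn S u" "(S \<inter> {x. u \<bullet> x = support_fn S u}) facet_of S"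
proof -
  obtain F b where F: "F facet_of S" "S \<subseteq> {x. u \<bullet> x \<le> b}" "F = S \<inter> {x. u \<bullet> x = b}"
    and "norm u = 1"
    using assms unfolding facet_normals_def by blast
  obtain z where "z \<in> F" using F(1) by (auto simp: facet_of_def)
  then have "support_fn S u = b" using F by (intro support_fn_eqI[of z]) auto
  then show "norm u = 1" "\<And>z. z \<in> S \<Longrightarrow> u \<bullet> z \<le> support_fn S u"
    "\<exists>z\<in>S. u \<bullet> z = support_fn S u" "(S \<inter> {x. u \<bullet> x = support_fn S u}) facet_of S"
    using F \<open>norm u = 1\<close> \<open>z \<in> F\<close> by auto
qed

lemma facet_normalsI:
  assumes a: "a \<noteq> 0" and sub: "S \<subseteq> {x. a \<bullet> x \<le> b}" and fac: "(S \<inter> {x. a \<bullet> x = b}) facet_of S"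
  shows "a /\<^sub>R norm a \<in> facet_normals S" "support_fn S (a /\<^sub>R norm a) = b / norm a"
proof -
  have na: "norm a > 0" using a by simp
  have eq: "{x. (a /\<^sub>R norm a) \<bullet> x = b / norm a} = {x. a \<bullet> x = b}"
    "{x. (a /\<^sub>R norm a) \<bullet> x \<le> b / norm a} = {x. a \<bullet> x \<le> b}"
    using na by (auto simp: field_simps)
  then show "a /\<^sub>R norm a \<in> facet_normals S"
    using sub fac na unfolding facet_normals_def by (intro CollectI conjI exI) auto
  obtain z where "z \<in> S \<inter> {x. a \<bullet> x = b}" using fac by (auto simp: facet_of_def)
  then show "support_fn S (a /\<^sub>R norm a) = b / norm a"
    using sub eq by (intro support_fn_eqI[of z]) auto
qed

lemma facet_normal_of_halfspace_Inter:
  fixes U :: "'a::euclidean_space set" and b :: "'a \<Rightarrow> real"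
  defines "Q \<equiv> {z. \<forall>u\<in>U. u \<bullet> z \<le> b u}"
  assumes fin: "finite U" and unit: "\<And>u. u \<in> U \<Longrightarrow> norm u = 1"
    and full: "aff_dim Q = int DIM('a)"
    and u: "u \<in> U" and touch: "u \<bullet> z = b u" "\<And>v. v \<in> U - {u} \<Longrightarrow> v \<bullet> z < b v"
  shows "(Q \<inter> {x. u \<bullet> x = b u}) facet_of Q"
proof -
  define G H where "G = Q \<inter> {x. u \<bullet> x = b u}" and "H = {x. u \<bullet> x = b u}"
  have "z \<in> Q" unfolding Q_def using touch by (force simp: less_imp_le)
  have "convex Q"
  proof -
    have "Q = (\<Inter>v\<in>U. {x. v \<bullet> x \<le> b v})" unfolding Q_def by auto
    then show ?thesis by (simp add: convex_INT convex_halfspace_le)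
  qed
  then have face: "G face_of Q" unfolding G_def
    by (rule face_of_Int_supporting_hyperplane_le) (use u in \<open>auto simp: Q_def\<close>)
  obtain d where d: "d > 0" "\<forall>x\<in>ball z d. \<forall>v\<in>U - {u}. v \<bullet> x < b v"
    using ex_ball_strict_halfspaces[of "U - {u}" z b] fin unit touch(2) by auto
  have "H \<inter> ball z d \<subseteq> G"
    using d(2) unfolding G_def H_def Q_def by (force simp: less_imp_le)
  then have "aff_dim (H \<inter> ball z d) \<le> aff_dim G" by (rule aff_dim_subset)
  moreover have "aff_dim (H \<inter> ball z d) = aff_dim H"
    unfolding H_def by (rule aff_dim_convex_Int_open) (use touch d in \<open>auto simp: convex_hyperplane\<close>)
  moreover have "aff_dim G \<le> aff_dim H" by (rule aff_dim_subset) (auto simp: G_def H_def)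
  moreover have "aff_dim H = int (DIM('a) - 1)"
    unfolding H_def using unit[OF u] by (intro aff_dim_hyperplane) auto
  ultimately have "aff_dim G = aff_dim Q - 1" using full DIM_positive[where 'a='a] by linarith
  moreover have "G \<noteq> {}" using \<open>z \<in> Q\<close> touch(1) unfolding G_def by blast
  ultimately show ?thesis using face unfolding G_def facet_of_def by simp
qed

lemma facet_of_halfspace_Inter_active:
  fixes U :: "'a::euclidean_space set" and b :: "'a \<Rightarrow> real"
  defines "Q \<equiv> {z. \<forall>u\<in>U. u \<bullet> z \<le> b u}"
  assumes fin: "finite U" and unit: "\<And>u. u \<in> U \<Longrightarrow> norm u = 1"
    and full: "aff_dim Q = int DIM('a)" and F: "F facet_of Q" and q: "q \<in> F"
  shows "\<exists>u\<in>U. u \<bullet> q = b u"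
proof (rule ccontr)
  assume none: "\<not> (\<exists>u\<in>U. u \<bullet> q = b u)"
  have "q \<in> Q" using q F facet_of_imp_subset by blast
  then have "u \<bullet> q < b u" if "u \<in> U" for u
    using that none unfolding Q_def by (auto simp: order_less_le)
  then obtain d where d: "d > 0" "\<forall>x\<in>ball q d. \<forall>u\<in>U. u \<bullet> x < b u"
    using ex_ball_strict_halfspaces[OF fin unit] by blast
  then have "ball q d \<subseteq> Q" unfolding Q_def by (auto intro: less_imp_le)
  then have "q \<in> interior Q" using d(1) mem_interior by blast
  moreover have "affine hull Q = UNIV" using full aff_dim_eq_full by blast
  then have "rel_interior Q = interior Q" by (rule rel_interior_interior)
  moreover have "F \<subseteq> rel_frontier Q"
    using F by (intro face_of_subset_rel_frontier) (auto simp: facet_of_def)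
  ultimately show False using q unfolding rel_frontier_def by blast
qed

lemma facet_of_halfspace_Inter_eq:
  fixes U :: "'a::euclidean_space set" and b :: "'a \<Rightarrow> real"
  defines "Q \<equiv> {z. \<forall>u\<in>U. u \<bullet> z \<le> b u}"
  assumes fin: "finite U" and unit: "\<And>u. u \<in> U \<Longrightarrow> norm u = 1"
    and full: "aff_dim Q = int DIM('a)"
    and facets: "\<And>u. u \<in> U \<Longrightarrow> (Q \<inter> {x. u \<bullet> x = b u}) facet_of Q"
    and F: "F facet_of Q"
  shows "\<exists>u\<in>U. F = Q \<inter> {x. u \<bullet> x = b u}"
proof -
  have "convex F" using F face_of_imp_convex facet_of_imp_face_of by blast
  moreover have "F \<noteq> {}" using F by (simp add: facet_of_def)
  ultimately obtain q where q: "q \<in> rel_interior F" using rel_interior_eq_empty by blast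
  then have "q \<in> F" using rel_interior_subset by blast
  then obtain u where u: "u \<in> U" "u \<bullet> q = b u"
    using facet_of_halfspace_Inter_active[OF fin unit full[unfolded Q_def] F[unfolded Q_def]]
    by blast
  let ?G = "Q \<inter> {x. u \<bullet> x = b u}"
  have "q \<in> ?G" using \<open>q \<in> F\<close> u(2) F facet_of_imp_subset by blast
  then have "F \<subseteq> ?G"
    using subset_of_face_of[OF facet_of_imp_face_of[OF facets[OF u(1)]] facet_of_imp_subset[OF F]] q
    by blast
  then show ?thesis using facet_of_subset_eq[OF F facets[OF u(1)]] u(1) by blast
qed

lemma facet_normals_halfspace_Inter:
  fixes U :: "'a::euclidean_space set" and b :: "'a \<Rightarrow> real"
  defines "Q \<equiv> {z. \<forall>u\<in>U. u \<bullet> z \<le> b u}"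
  assumes fin: "finite U" and unit: "\<And>u. u \<in> U \<Longrightarrow> norm u = 1"
    and full: "aff_dim Q = int DIM('a)"
    and facets: "\<And>u. u \<in> U \<Longrightarrow> (Q \<inter> {x. u \<bullet> x = b u}) facet_of Q"
  shows "facet_normals Q = U"
proof
  show "U \<subseteq> facet_normals Q"
    using facets unit unfolding facet_normals_def Q_def by blast
  show "facet_normals Q \<subseteq> U"
  proof
    fix u' assume "u' \<in> facet_normals Q"
    then obtain F b' where F: "F facet_of Q" "Q \<subseteq> {x. u' \<bullet> x \<le> b'}" "F = Q \<inter> {x. u' \<bullet> x = b'}"
      and "norm u' = 1"
      unfolding facet_normals_def by blast
    obtain u where u: "u \<in> U" "F = Q \<inter> {x. u \<bullet> x = b u}"
      using facet_of_halfspace_Inter_eq[OF fin unit full[unfolded Q_def] facets[unfolded Q_def] F(1)[unfolded Q_def]]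
      unfolding Q_def by blast
    have "u' = u"
      by (rule facet_unit_normal_unique[OF full F(1) u(2) _ F(3) F(2) unit[OF u(1)] \<open>norm u' = 1\<close>])
        (use u(1) in \<open>auto simp: Q_def\<close>)
    then show "u' \<in> U" using u(1) by simp
  qed
qed

locale full_dim_polytope =
  fixes P :: "'a::euclidean_space set"
  assumes polytope: "polytope P" and full_dim: "aff_dim P = int DIM('a)"
begin

lemma nonempty: "P \<noteq> {}"
  using full_dim aff_dim_empty[of P] by auto

lemma finite_facet_normals: "finite (facet_normals P)"
proof -
  let ?facet = "\<lambda>u. P \<inter> {x. u \<bullet> x = support_fn P u}"
  have "inj_on ?facet (facet_normals P)"
  proof (rule inj_onI)
    fix u u' assume u: "u \<in> facet_normals P" and u': "u' \<in> facet_normals P"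
      and eq: "?facet u = ?facet u'"
    show "u = u'"
      by (rule facet_unit_normal_unique[OF full_dim facet_normalsD(4)[OF u'] refl _ eq[symmetric]])
        (use facet_normalsD[OF u] facet_normalsD[OF u'] in auto)
  qed
  moreover have "?facet ` facet_normals P \<subseteq> {F. F facet_of P}" using facet_normalsD(4) by auto
  ultimately show ?thesis
    using finite_polytope_facets[OF polytope] by (meson finite_imageD finite_subset)
qed

lemma eq_facet_halfspaces: "P = {z. \<forall>u\<in>facet_normals P. u \<bullet> z \<le> support_fn P u}"
proof
  show "P \<subseteq> {z. \<forall>u\<in>facet_normals P. u \<bullet> z \<le> support_fn P u}"
    using facet_normalsD(2) by blast
  obtain F where "finite F" and seq: "P = affine hull P \<inter> \<Inter>F"
    and "\<And>h. h \<in> F \<Longrightarrow> \<exists>a b. a \<noteq> 0 \<and> h = {x. a \<bullet> x \<le> b}"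
    and min: "\<And>F'. F' \<subset> F \<Longrightarrow> P \<subset> affine hull P \<inter> \<Inter>F'"
    using polytope_imp_polyhedron[OF polytope] by (simp add: polyhedron_Int_affine_minimal) meson
  then obtain a b where ab: "\<And>h. h \<in> F \<Longrightarrow> a h \<noteq> 0 \<and> h = {x. a h \<bullet> x \<le> b h}"
    by metis
  have "{z. \<forall>u\<in>facet_normals P. u \<bullet> z \<le> support_fn P u} \<subseteq> h" if h: "h \<in> F" for h
  proof
    fix z assume z: "z \<in> {z. \<forall>u\<in>facet_normals P. u \<bullet> z \<le> support_fn P u}"
    have "(P \<inter> {x. a h \<bullet> x = b h}) facet_of P"
      using facet_of_polyhedron_explicit[OF \<open>finite F\<close> seq ab min] h by blast
    moreover have "P \<subseteq> {x. a h \<bullet> x \<le> b h}" using seq h ab by blast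
    ultimately have "a h /\<^sub>R norm (a h) \<in> facet_normals P"
      "support_fn P (a h /\<^sub>R norm (a h)) = b h / norm (a h)"
      using facet_normalsI ab[OF h] by blast+
    then have "(a h /\<^sub>R norm (a h)) \<bullet> z \<le> b h / norm (a h)" using z by fastforce
    then have "a h \<bullet> z \<le> b h" using ab[OF h] by (simp add: field_simps)
    then show "z \<in> h" using ab[OF h] by blast
  qed
  moreover have "affine hull P = UNIV" using full_dim aff_dim_eq_full by blast
  ultimately show "{z. \<forall>u\<in>facet_normals P. u \<bullet> z \<le> support_fn P u} \<subseteq> P"
    by (subst seq) blast
qed

lemma ex_strict_interior_point: "\<exists>p. \<forall>u\<in>facet_normals P. u \<bullet> p < support_fn P u"
proof -
  have "rel_interior P \<noteq> {}"
    using rel_interior_eq_empty polytope_imp_convex[OF polytope] nonempty by blast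
  moreover have "affine hull P = UNIV" using full_dim aff_dim_eq_full by blast
  ultimately obtain p where "p \<in> interior P" using rel_interior_interior by blast
  then obtain e where e: "e > 0" "ball p e \<subseteq> P" using mem_interior by blast
  have "u \<bullet> p < support_fn P u" if u: "u \<in> facet_normals P" for u
  proof -
    have "p + (e/2) *\<^sub>R u \<in> ball p e" using e facet_normalsD(1)[OF u] by (simp add: dist_norm)
    then have "u \<bullet> (p + (e/2) *\<^sub>R u) \<le> support_fn P u" using e facet_normalsD(2)[OF u] by blast
    moreover have "u \<bullet> u = 1" using facet_normalsD(1)[OF u] by (simp add: dot_square_norm)
    ultimately show ?thesis using e by (simp add: inner_add_right)
  qed
  then show ?thesis by blast
qed

lemma homothetic_image_memI:
  assumes e: "0 \<le> e" "e < 1" and z: "z \<in> P"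
    and slack: "\<And>u. u \<in> facet_normals P \<Longrightarrow> e * (support_fn P u - u \<bullet> v) \<le> support_fn P u - u \<bullet> z"
  shows "z \<in> (\<lambda>x. e *\<^sub>R v + (1 - e) *\<^sub>R x) ` P"
proof -
  define p where "p = inverse (1 - e) *\<^sub>R (z - e *\<^sub>R v)"
  have "z = e *\<^sub>R v + (1 - e) *\<^sub>R p" using e by (simp add: p_def)
  moreover have "u \<bullet> p \<le> support_fn P u" if u: "u \<in> facet_normals P" for u
  proof -
    have "u \<bullet> p = inverse (1 - e) * (u \<bullet> z - e * (u \<bullet> v))"
      by (simp add: p_def inner_diff_right)
    also have "\<dots> \<le> inverse (1 - e) * ((1 - e) * support_fn P u)"
      using slack[OF u] e by (intro mult_left_mono) (auto simp: algebra_simps)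
    also have "\<dots> = support_fn P u" using e by simp
    finally show ?thesis .
  qed
  then have "p \<in> P" using eq_facet_halfspaces by blast
  ultimately show ?thesis by blast
qed

end

section \<open>Skeletons and apexes\<close>

locale skeleton = full_dim_polytope P for P :: "'a::euclidean_space set" +
  fixes k :: nat and Xs :: "nat \<Rightarrow> 'a set"
  assumes skeleton: "is_skeleton (facet_normals P) k Xs"
begin

definition choices :: "(nat \<Rightarrow> 'a) set" where
  "choices = PiE {..<k} Xs"

definition choice_basis :: "(nat \<Rightarrow> 'a) \<Rightarrow> 'a set" where
  "choice_basis c = (\<Union>i<k. Xs i - {c i})"

definition skeleton_normals :: "'a set" where
  "skeleton_normals = (\<Union>i<k. Xs i)"

lemma block:
  assumes "i < k"
  shows "Xs i \<subseteq> facet_normals P" "finite (Xs i)" "Xs i \<noteq> {}" "\<not> affine_dependent (Xs i)"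
    "0 \<in> rel_interior (convex hull (Xs i))"
  using skeleton assms unfolding is_skeleton_def by auto

lemma blocks_disjoint: "i < k \<Longrightarrow> j < k \<Longrightarrow> i \<noteq> j \<Longrightarrow> Xs i \<inter> Xs j = {}"
  using skeleton unfolding is_skeleton_def by auto

lemma unique_decomposition:
  "\<exists>!f. (\<forall>i<k. f i \<in> span (Xs i)) \<and> (\<forall>i\<ge>k. f i = 0) \<and> v = (\<Sum>i<k. f i)"
proof -
  have "\<forall>v. \<exists>!f. (\<forall>i<k. f i \<in> span (Xs i)) \<and> (\<forall>i\<ge>k. f i = 0) \<and> v = (\<Sum>i<k. f i)"
    using skeleton unfolding is_skeleton_def by (elim conjE)
  then show ?thesis by (rule spec)
qed

lemma ex_decomposition: "\<exists>f. (\<forall>i<k. f i \<in> span (Xs i)) \<and> v = (\<Sum>i<k. f i)"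
  using unique_decomposition[of v] by blast

lemma decomposition_of_zero:
  assumes f: "\<forall>i<k. f i \<in> span (Xs i)" and sum0: "(\<Sum>i<k. f i) = 0" and i: "i < k"
  shows "f i = 0"
proof -
  define g where "g i = (if i < k then f i else 0)" for i
  have "(\<Sum>i<k. g i) = (\<Sum>i<k. f i)" unfolding g_def by (rule sum.cong) auto
  then have g: "(\<forall>i<k. g i \<in> span (Xs i)) \<and> (\<forall>i\<ge>k. g i = 0) \<and> 0 = (\<Sum>i<k. g i)"
    using f sum0 unfolding g_def by auto
  have zero: "(\<forall>i<k. (\<lambda>_. 0::'a) i \<in> span (Xs i)) \<and> (\<forall>i\<ge>k. (\<lambda>_. 0::'a) i = 0)
      \<and> 0 = (\<Sum>i<k. (\<lambda>_. 0::'a) i)"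
    by (auto simp: span_zero)
  obtain f0 where f0: "\<forall>h. (\<forall>i<k. h i \<in> span (Xs i)) \<and> (\<forall>i\<ge>k. h i = 0) \<and> 0 = (\<Sum>i<k. h i)
      \<longrightarrow> h = f0"
    using unique_decomposition[of 0] by (rule ex1E)
  have "g = (\<lambda>_. 0)" using f0[rule_format, OF g] f0[rule_format, OF zero] by simp
  then show ?thesis using i fun_cong[of g _ i] unfolding g_def by simp
qed

definition bary :: "nat \<Rightarrow> 'a \<Rightarrow> real" where
  "bary i = (SOME \<alpha>. centring_weights (Xs i) \<alpha>)"

lemma bary: "i < k \<Longrightarrow> centring_weights (Xs i) (bary i)"
  unfolding bary_def by (rule someI_ex[OF centring_weights_exist[OF block(4,5)]])

lemma bary_pos: "i < k \<Longrightarrow> y \<in> Xs i \<Longrightarrow> 0 < bary i y"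
  using bary by (auto simp: centring_weights_def)

lemma bary_sum: "i < k \<Longrightarrow> sum (bary i) (Xs i) = 1"
  using bary by (auto simp: centring_weights_def)

lemma choicesD: "c \<in> choices \<Longrightarrow> i < k \<Longrightarrow> c i \<in> Xs i"
  unfolding choices_def by auto

lemma finite_choices: "finite choices"
  unfolding choices_def by (rule finite_PiE) (use block(2) in auto)

lemma choices_nonempty: "choices \<noteq> {}"
  unfolding choices_def using block(3) by (auto simp: PiE_eq_empty_iff)

lemma card_choices: "card choices = (\<Prod>i<k. card (Xs i))"
  unfolding choices_def by (simp add: card_PiE)

lemma choice_basis_subset: "choice_basis c \<subseteq> skeleton_normals"
  unfolding choice_basis_def skeleton_normals_def by blast

lemma skeleton_normals_subset: "skeleton_normals \<subseteq> facet_normals P"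
  unfolding skeleton_normals_def using block(1) by blast

lemma finite_skeleton_normals: "finite skeleton_normals"
  unfolding skeleton_normals_def using block(2) by blast

lemma finite_choice_basis: "finite (choice_basis c)"
  using finite_subset[OF choice_basis_subset finite_skeleton_normals] .

lemma sum_choice_basis: "sum g (choice_basis c) = (\<Sum>i<k. sum g (Xs i - {c i}))"
  unfolding choice_basis_def by (rule sum.UNION_disjoint) (use block(2) blocks_disjoint in auto)

lemma sum_skeleton_normals: "sum g skeleton_normals = (\<Sum>i<k. sum g (Xs i))"
  unfolding skeleton_normals_def by (rule sum.UNION_disjoint) (use block(2) blocks_disjoint in auto)

lemma independent_choice_basis:
  assumes c: "c \<in> choices"
  shows "independent (choice_basis c)"
proof
  assume "dependent (choice_basis c)"
  then obtain u where u: "\<exists>v\<in>choice_basis c. u v \<noteq> 0" "(\<Sum>v\<in>choice_basis c. u v *\<^sub>R v) = 0"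
    using dependent_finite[OF finite_choice_basis] by blast
  define f where "f i = (\<Sum>v\<in>Xs i - {c i}. u v *\<^sub>R v)" for i
  have "\<forall>i<k. f i \<in> span (Xs i)"
    unfolding f_def by (intro allI impI span_sum span_scale span_base) auto
  moreover have "(\<Sum>i<k. f i) = 0" using u(2) unfolding f_def by (simp add: sum_choice_basis)
  ultimately have f0: "f i = 0" if "i < k" for i using decomposition_of_zero that by blast
  obtain v i where v: "u v \<noteq> 0" "i < k" "v \<in> Xs i - {c i}"
    using u(1) unfolding choice_basis_def by blast
  have "independent (Xs i - {c i})"
    using independent_Diff_centred_vertex[OF block(4) bary choicesD[OF c]] v(2) by blast
  then show False
    using f0[OF v(2)] v dependent_finite[of "Xs i - {c i}"] block(2)[OF v(2)] unfolding f_def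
    by auto
qed

lemma span_choice_basis:
  assumes c: "c \<in> choices"
  shows "span (choice_basis c) = UNIV"
proof -
  have "f i \<in> span (choice_basis c)" if "i < k" "f i \<in> span (Xs i)" for f i
  proof -
    have "span (Xs i) \<subseteq> span (Xs i - {c i})"
      using centred_simplex_subset_span_Diff[OF block(2) bary choicesD[OF c]] that(1)
      by (simp add: span_minimal)
    also have "\<dots> \<subseteq> span (choice_basis c)"
      by (rule span_mono) (use that(1) in \<open>auto simp: choice_basis_def\<close>)
    finally show ?thesis using that(2) by blast
  qed
  then have "v \<in> span (choice_basis c)" for v
    using ex_decomposition[of v] by (metis (no_types, lifting) lessThan_iff span_sum)
  then show ?thesis by auto
qed

lemma prod_card_blocks_le: "(\<Prod>i<k. card (Xs i)) \<le> 2 ^ DIM('a)"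
proof -
  obtain c where c: "c \<in> choices" using choices_nonempty by blast
  have "card (choice_basis c) = (\<Sum>i<k. card (Xs i) - 1)"
    unfolding choice_basis_def
    by (subst card_UN_disjoint) (use block(2) blocks_disjoint choicesD[OF c] in auto)
  moreover have "card (choice_basis c) \<le> DIM('a)"
    using independent_bound[OF independent_choice_basis[OF c]] by simp
  ultimately have sum_le: "(\<Sum>i<k. card (Xs i) - 1) \<le> DIM('a)" by simp
  have "card (Xs i) \<le> 2 ^ (card (Xs i) - 1)" for i
    by (cases "card (Xs i)") (auto simp: Suc_le_eq)
  then have "(\<Prod>i<k. card (Xs i)) \<le> (\<Prod>i<k. (2::nat) ^ (card (Xs i) - 1))"
    by (intro prod_mono) auto
  also have "\<dots> = 2 ^ (\<Sum>i<k. card (Xs i) - 1)" by (simp add: power_sum)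
  also have "\<dots> \<le> 2 ^ DIM('a)" using sum_le by (intro power_increasing) auto
  finally show ?thesis .
qed

definition apex :: "('a \<Rightarrow> real) \<Rightarrow> (nat \<Rightarrow> 'a) \<Rightarrow> 'a" where
  "apex g c = (THE w. \<forall>y\<in>choice_basis c. y \<bullet> w = g y)"

lemma ex1_apex:
  assumes c: "c \<in> choices"
  shows "\<exists>!w. \<forall>y\<in>choice_basis c. y \<bullet> w = g y"
proof -
  obtain l :: "'a \<Rightarrow> real" where l: "linear l" "\<forall>x\<in>choice_basis c. l x = g x"
    using linear_independent_extend[OF independent_choice_basis[OF c]] by blast
  define w where "w = (\<Sum>e\<in>Basis. l e *\<^sub>R e)"
  have inner_w: "y \<bullet> w = l y" for y
  proof -
    have "y \<bullet> w = l (\<Sum>e\<in>Basis. (y \<bullet> e) *\<^sub>R e)"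
      unfolding w_def
      by (simp add: inner_sum_right linear_sum[OF l(1)] linear_scale[OF l(1)] mult.commute)
    then show ?thesis by (simp add: euclidean_representation)
  qed
  have "w' = w" if w': "\<forall>y\<in>choice_basis c. y \<bullet> w' = g y" for w'
  proof -
    have "orthogonal (w' - w) y" if "y \<in> choice_basis c" for y
    proof -
      have "y \<bullet> w' = g y" "y \<bullet> w = g y" using that w' inner_w l(2) by auto
      then show ?thesis by (simp add: orthogonal_def inner_commute inner_diff_right)
    qed
    then have "orthogonal (w' - w) (w' - w)"
      using orthogonal_to_span span_choice_basis[OF c] by (metis UNIV_I orthogonal_commute)
    then show "w' = w" by (simp add: orthogonal_def)
  qed
  moreover have "\<forall>y\<in>choice_basis c. y \<bullet> w = g y" using inner_w l(2) by simp
  ultimately show ?thesis by blast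
qed

lemma apex: "c \<in> choices \<Longrightarrow> y \<in> choice_basis c \<Longrightarrow> y \<bullet> apex g c = g y"
  unfolding apex_def using theI'[OF ex1_apex] by blast

lemma apex_eqI: "c \<in> choices \<Longrightarrow> (\<And>y. y \<in> choice_basis c \<Longrightarrow> y \<bullet> w = g y) \<Longrightarrow> apex g c = w"
  unfolding apex_def by (rule the1_equality[OF ex1_apex]) auto

definition block_index :: "'a \<Rightarrow> nat" where
  "block_index y = (THE i. i < k \<and> y \<in> Xs i)"

lemma block_index: "i < k \<Longrightarrow> y \<in> Xs i \<Longrightarrow> block_index y = i"
  unfolding block_index_def by (rule the_equality) (use blocks_disjoint in blast)+

lemma ex_block_nonneg_coeffs:
  assumes f: "\<forall>i<k. f i \<in> span (Xs i)"
  shows "\<exists>L C. \<forall>i<k. C i \<in> Xs i \<and> L i (C i) = 0 \<and> (\<forall>y\<in>Xs i. 0 \<le> L i y)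
    \<and> (\<Sum>y\<in>Xs i. L i y *\<^sub>R y) = f i"
proof -
  have "\<forall>i\<in>{..<k}. \<exists>p. snd p \<in> Xs i \<and> fst p (snd p) = 0 \<and> (\<forall>y\<in>Xs i. 0 \<le> fst p y)
      \<and> (\<Sum>y\<in>Xs i. fst p y *\<^sub>R y) = f i"
  proof
    fix i assume "i \<in> {..<k}"
    then have i: "i < k" by simp
    obtain l ci where "ci \<in> Xs i" "l ci = 0" "\<forall>y\<in>Xs i. 0 \<le> l y" "(\<Sum>y\<in>Xs i. l y *\<^sub>R y) = f i"
      using centred_simplex_nonneg_coeffs[OF block(2)[OF i] bary[OF i]] f i by blast
    then show "\<exists>p. snd p \<in> Xs i \<and> fst p (snd p) = 0 \<and> (\<forall>y\<in>Xs i. 0 \<le> fst p y)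
      \<and> (\<Sum>y\<in>Xs i. fst p y *\<^sub>R y) = f i"
      by (intro exI[of _ "(l, ci)"]) simp
  qed
  from bchoice[OF this] obtain p where "\<forall>i\<in>{..<k}. snd (p i) \<in> Xs i \<and> fst (p i) (snd (p i)) = 0
      \<and> (\<forall>y\<in>Xs i. 0 \<le> fst (p i) y) \<and> (\<Sum>y\<in>Xs i. fst (p i) y *\<^sub>R y) = f i"
    by (rule exE)
  then show ?thesis by (intro exI[of _ "\<lambda>i. fst (p i)"] exI[of _ "\<lambda>i. snd (p i)"]) simp
qed

lemma ex_choice_cone_coeffs:
  "\<exists>l c. c \<in> choices \<and> (\<forall>y. 0 \<le> l y) \<and> (\<forall>y. l y \<noteq> 0 \<longrightarrow> y \<in> choice_basis c)
     \<and> v = (\<Sum>y\<in>skeleton_normals. l y *\<^sub>R y)"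
proof -
  obtain f where f: "\<forall>i<k. f i \<in> span (Xs i)" "v = (\<Sum>i<k. f i)"
    using ex_decomposition by blast
  obtain L C where LC: "\<And>i. i < k \<Longrightarrow> C i \<in> Xs i \<and> L i (C i) = 0 \<and> (\<forall>y\<in>Xs i. 0 \<le> L i y)
      \<and> (\<Sum>y\<in>Xs i. L i y *\<^sub>R y) = f i"
    using ex_block_nonneg_coeffs[OF f(1)] by blast
  define l where "l y = (if y \<in> skeleton_normals then L (block_index y) y else 0)" for y
  define c where "c = restrict C {..<k}"
  have l_block: "l y = L i y" if "i < k" "y \<in> Xs i" for i y
    using that block_index[OF that] unfolding l_def skeleton_normals_def by auto
  have "c \<in> choices" unfolding choices_def c_def using LC by auto
  moreover have "0 \<le> l y" for y
  proof (cases "y \<in> skeleton_normals")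
    case True
    then obtain i where "i < k" "y \<in> Xs i" unfolding skeleton_normals_def by blast
    then show ?thesis using LC l_block by metis
  qed (simp add: l_def)
  moreover have "y \<in> choice_basis c" if ly: "l y \<noteq> 0" for y
  proof -
    have "y \<in> skeleton_normals" using ly by (auto simp: l_def split: if_splits)
    then obtain i where i: "i < k" "y \<in> Xs i" unfolding skeleton_normals_def by blast
    then have "y \<noteq> c i" using ly LC l_block unfolding c_def by auto
    then show ?thesis using i unfolding choice_basis_def by blast
  qed
  moreover have "v = (\<Sum>y\<in>skeleton_normals. l y *\<^sub>R y)"
    unfolding sum_skeleton_normals f(2) using LC l_block by (intro sum.cong) auto
  ultimately show ?thesis by blast
qed

lemma ex_choice_avoiding:
  assumes "y \<in> skeleton_normals"
  shows "\<exists>c\<in>choices. y \<in> choice_basis c"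
proof -
  obtain i where i: "i < k" "y \<in> Xs i" using assms unfolding skeleton_normals_def by blast
  have "0 \<notin> Xs i" using facet_normalsD(1) block(1)[OF i(1)] by force
  then obtain y' where y': "y' \<in> Xs i" "y' \<noteq> y"
    using centred_simplex_other_vertex[OF bary[OF i(1)] _ i(2)] by blast
  obtain c0 where c0: "c0 \<in> choices" using choices_nonempty by blast
  define c where "c = restrict (c0(i := y')) {..<k}"
  have "c \<in> choices" using y' choicesD[OF c0] unfolding c_def choices_def by auto
  moreover have "y \<in> choice_basis c" using i y' unfolding c_def choice_basis_def by auto
  ultimately show ?thesis by blast
qed

section \<open>The auxiliary polytope\<close>

definition block_slack :: "nat \<Rightarrow> real" where
  "block_slack i = (\<Sum>y\<in>Xs i. bary i y * support_fn P y)"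

lemma block_slack_eq:
  "i < k \<Longrightarrow> (\<Sum>y\<in>Xs i. bary i y * (support_fn P y - y \<bullet> x)) = block_slack i"
  using centring_weights_inner_sum[OF bary, of i x]
  by (simp add: block_slack_def right_diff_distrib sum_subtractf)

lemma block_slack_pos:
  assumes i: "i < k" shows "0 < block_slack i"
proof -
  obtain p where p: "\<forall>u\<in>facet_normals P. u \<bullet> p < support_fn P u"
    using ex_strict_interior_point by blast
  have "0 < (\<Sum>y\<in>Xs i. bary i y * (support_fn P y - y \<bullet> p))"
    using bary_pos[OF i] p block(1)[OF i]
    by (intro sum_pos[OF block(2)[OF i] block(3)[OF i]]) force
  then show ?thesis using block_slack_eq[OF i] by simp
qed

definition min_block_slack :: real where
  "min_block_slack = Min (insert 1 (block_slack ` {..<k}))"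

lemma min_block_slack_pos: "0 < min_block_slack"
  unfolding min_block_slack_def using block_slack_pos by (subst Min_gr_iff) auto

lemma min_block_slack_le: "i < k \<Longrightarrow> min_block_slack \<le> block_slack i"
  unfolding min_block_slack_def by (intro Min_le) auto

lemma ex_large_slack_in_block:
  assumes i: "i < k"
  shows "\<exists>y\<in>Xs i. min_block_slack \<le> support_fn P y - y \<bullet> x"
proof (rule ccontr)
  assume "\<not> ?thesis"
  then have "\<forall>y\<in>Xs i. support_fn P y - y \<bullet> x < block_slack i"
    using min_block_slack_le[OF i] by force
  then have "(\<Sum>y\<in>Xs i. bary i y * (support_fn P y - y \<bullet> x)) < (\<Sum>y\<in>Xs i. bary i y * block_slack i)"
    using bary_pos[OF i] by (intro sum_strict_mono[OF block(2)[OF i] block(3)[OF i]]) simp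
  also have "\<dots> = block_slack i" using bary_sum[OF i] by (simp add: sum_distrib_right[symmetric])
  finally show False using block_slack_eq[OF i] by simp
qed

definition shifted_apex :: "real \<Rightarrow> (nat \<Rightarrow> 'a) \<Rightarrow> 'a" where
  "shifted_apex r c = apex (\<lambda>y. support_fn P y - r) c"

lemma shifted_apex:
  "c \<in> choices \<Longrightarrow> y \<in> choice_basis c \<Longrightarrow> y \<bullet> shifted_apex r c = support_fn P y - r"
  unfolding shifted_apex_def by (rule apex)

lemma shifted_apex_le:
  assumes c: "c \<in> choices" and r: "r \<le> min_block_slack" and y: "y \<in> skeleton_normals"
  shows "y \<bullet> shifted_apex r c \<le> support_fn P y - r"
proof -
  obtain i where i: "i < k" "y \<in> Xs i" using y unfolding skeleton_normals_def by blast
  show ?thesis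
  proof (cases "y = c i")
    case True
    have "x \<bullet> shifted_apex r c = support_fn P x - r" if "x \<in> Xs i - {c i}" for x
      using that i(1) by (intro shifted_apex[OF c]) (auto simp: choice_basis_def)
    moreover have "r \<le> block_slack i" using r min_block_slack_le[OF i(1)] by simp
    ultimately show ?thesis unfolding True block_slack_def
      by (intro centred_simplex_removed_vertex_le[OF block(2)[OF i(1)] bary[OF i(1)] choicesD[OF c i(1)]])
  next
    case False
    then have "y \<in> choice_basis c" using i unfolding choice_basis_def by blast
    then show ?thesis using shifted_apex[OF c] by simp
  qed
qed

definition aux_support :: "real \<Rightarrow> 'a \<Rightarrow> real" where
  "aux_support r u = Max ((\<lambda>c. u \<bullet> shifted_apex r c) ` choices) + r"

text \<open>The smallest polytope with the facet normals of P that contains the balls of radius r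
  around all shifted apexes.\<close>
definition aux_polytope :: "real \<Rightarrow> 'a set" where
  "aux_polytope r = {z. \<forall>u\<in>facet_normals P. u \<bullet> z \<le> aux_support r u}"

lemma shifted_apex_le_aux_support:
  "c \<in> choices \<Longrightarrow> u \<bullet> shifted_apex r c + r \<le> aux_support r u"
  unfolding aux_support_def using finite_choices by simp

lemma ex_choice_aux_support: "\<exists>c\<in>choices. aux_support r u = u \<bullet> shifted_apex r c + r"
proof -
  have "Max ((\<lambda>c. u \<bullet> shifted_apex r c) ` choices) \<in> (\<lambda>c. u \<bullet> shifted_apex r c) ` choices"
    using finite_choices choices_nonempty by (intro Max_in) auto
  then show ?thesis unfolding aux_support_def by force
qed

lemma aux_support_skeleton:
  assumes r: "r \<le> min_block_slack" and y: "y \<in> skeleton_normals"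
  shows "aux_support r y = support_fn P y"
proof -
  obtain c where c: "c \<in> choices" "y \<in> choice_basis c" using ex_choice_avoiding[OF y] by blast
  obtain c' where c': "c' \<in> choices" "aux_support r y = y \<bullet> shifted_apex r c' + r"
    using ex_choice_aux_support by blast
  then have "aux_support r y \<le> support_fn P y" using shifted_apex_le[OF c'(1) r y] by simp
  moreover have "support_fn P y \<le> aux_support r y"
    using shifted_apex_le_aux_support[OF c(1), of y r] shifted_apex[OF c] by simp
  ultimately show ?thesis by simp
qed

definition cone_coeffs :: "'a \<Rightarrow> ('a \<Rightarrow> real) \<times> (nat \<Rightarrow> 'a)" where
  "cone_coeffs u = (SOME (l, c). c \<in> choices \<and> (\<forall>y. 0 \<le> l y)
     \<and> (\<forall>y. l y \<noteq> 0 \<longrightarrow> y \<in> choice_basis c) \<and> u = (\<Sum>y\<in>skeleton_normals. l y *\<^sub>R y))"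

definition coeff :: "'a \<Rightarrow> 'a \<Rightarrow> real" where
  "coeff u = fst (cone_coeffs u)"

definition coeff_choice :: "'a \<Rightarrow> nat \<Rightarrow> 'a" where
  "coeff_choice u = snd (cone_coeffs u)"

lemma coeff:
  shows "coeff_choice u \<in> choices" and "0 \<le> coeff u y"
    and "coeff u y \<noteq> 0 \<Longrightarrow> y \<in> choice_basis (coeff_choice u)"
    and "(\<Sum>y\<in>skeleton_normals. coeff u y *\<^sub>R y) = u"
proof -
  have "\<exists>p. case p of (l, c) \<Rightarrow> c \<in> choices \<and> (\<forall>y. 0 \<le> l y)
     \<and> (\<forall>y. l y \<noteq> 0 \<longrightarrow> y \<in> choice_basis c) \<and> u = (\<Sum>y\<in>skeleton_normals. l y *\<^sub>R y)"
    using ex_choice_cone_coeffs[of u] by auto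
  from someI_ex[OF this] show "coeff_choice u \<in> choices" "0 \<le> coeff u y"
    "coeff u y \<noteq> 0 \<Longrightarrow> y \<in> choice_basis (coeff_choice u)"
    "(\<Sum>y\<in>skeleton_normals. coeff u y *\<^sub>R y) = u"
    unfolding coeff_def coeff_choice_def cone_coeffs_def by (auto split: prod.splits)
qed

lemma coeff_nonzero_skeleton: "coeff u y \<noteq> 0 \<Longrightarrow> y \<in> skeleton_normals"
  using coeff(3) choice_basis_subset by blast

lemma inner_coeff: "u \<bullet> z = (\<Sum>y\<in>skeleton_normals. coeff u y * (y \<bullet> z))"
proof -
  have "u \<bullet> z = (\<Sum>y\<in>skeleton_normals. coeff u y *\<^sub>R y) \<bullet> z" by (simp only: coeff(4))
  then show ?thesis by (simp add: inner_sum_left)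
qed

lemma norm_le_sum_coeff: "norm u \<le> (\<Sum>y\<in>skeleton_normals. coeff u y)"
proof -
  have "norm u \<le> (\<Sum>y\<in>skeleton_normals. norm (coeff u y *\<^sub>R y))"
    using norm_sum[of "\<lambda>y. coeff u y *\<^sub>R y" skeleton_normals] by (simp only: coeff(4))
  also have "\<dots> = (\<Sum>y\<in>skeleton_normals. coeff u y)"
    using skeleton_normals_subset facet_normalsD(1) coeff(2) by (intro sum.cong) auto
  finally show ?thesis .
qed

definition cone_support :: "'a \<Rightarrow> real" where
  "cone_support u = (\<Sum>y\<in>skeleton_normals. coeff u y * support_fn P y)"

lemma inner_apex_eq_coeff_sum:
  assumes c: "c \<in> choices" and supp: "\<And>y. coeff u y \<noteq> 0 \<Longrightarrow> y \<in> choice_basis c"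
  shows "u \<bullet> apex g c = (\<Sum>y\<in>skeleton_normals. coeff u y * g y)"
  unfolding inner_coeff[of u] by (rule sum.cong) (use apex[OF c] supp in auto)

lemma aux_support_eq:
  assumes r: "r \<le> min_block_slack"
  shows "aux_support r u = cone_support u + r - r * (\<Sum>y\<in>skeleton_normals. coeff u y)"
proof -
  let ?S = "cone_support u - r * (\<Sum>y\<in>skeleton_normals. coeff u y)"
  have upper: "u \<bullet> shifted_apex r c \<le> ?S" if c: "c \<in> choices" for c
  proof -
    have "u \<bullet> shifted_apex r c \<le> (\<Sum>y\<in>skeleton_normals. coeff u y * (support_fn P y - r))"
      unfolding inner_coeff[of u]
      by (intro sum_mono mult_left_mono) (use shifted_apex_le[OF c r] coeff(2) in auto)
    then show ?thesis by (simp add: cone_support_def sum_mult_diff_const)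
  qed
  have attained: "u \<bullet> shifted_apex r (coeff_choice u) = ?S"
    unfolding shifted_apex_def
    by (subst inner_apex_eq_coeff_sum[OF coeff(1) coeff(3)]) (simp_all add: cone_support_def sum_mult_diff_const)
  obtain c where c: "c \<in> choices" "aux_support r u = u \<bullet> shifted_apex r c + r"
    using ex_choice_aux_support by blast
  have "aux_support r u \<le> ?S + r" using upper[OF c(1)] c(2) by simp
  moreover have "?S + r \<le> aux_support r u"
    using shifted_apex_le_aux_support[OF coeff(1)[of u], of u r] attained by simp
  ultimately show ?thesis by simp
qed

lemma aux_polytope_le_cone_support:
  assumes r: "r \<le> min_block_slack" and z: "z \<in> aux_polytope r"
  shows "v \<bullet> z \<le> cone_support v"
  unfolding inner_coeff[of v] cone_support_def
proof (intro sum_mono mult_left_mono)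
  fix y assume y: "y \<in> skeleton_normals"
  then have "y \<bullet> z \<le> aux_support r y"
    using z skeleton_normals_subset unfolding aux_polytope_def by blast
  then show "y \<bullet> z \<le> support_fn P y" using aux_support_skeleton[OF r y] by simp
qed (rule coeff(2))

lemma bounded_aux_polytope:
  assumes r: "r \<le> min_block_slack" shows "bounded (aux_polytope r)"
  unfolding bounded_iff
proof (intro exI ballI)
  fix z assume z: "z \<in> aux_polytope r"
  have "\<bar>z \<bullet> e\<bar> \<le> \<bar>cone_support e\<bar> + \<bar>cone_support (- e)\<bar>" for e
  proof -
    have "z \<bullet> e \<le> cone_support e" "- (z \<bullet> e) \<le> cone_support (- e)"
      using aux_polytope_le_cone_support[OF r z, of e] aux_polytope_le_cone_support[OF r z, of "- e"]
      by (simp_all add: inner_commute)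
    then show ?thesis by (simp add: abs_le_iff) linarith
  qed
  then have "(\<Sum>e\<in>Basis. \<bar>z \<bullet> e\<bar>) \<le> (\<Sum>e\<in>Basis. \<bar>cone_support e\<bar> + \<bar>cone_support (- e)\<bar>)"
    by (intro sum_mono)
  then show "norm z \<le> (\<Sum>e\<in>Basis. \<bar>cone_support e\<bar> + \<bar>cone_support (- e)\<bar>)"
    using norm_le_l1[of z] by linarith
qed

lemma polytope_aux_polytope:
  assumes r: "r \<le> min_block_slack" shows "polytope (aux_polytope r)"
proof -
  have "aux_polytope r = (\<Inter>u\<in>facet_normals P. {z. u \<bullet> z \<le> aux_support r u})"
    unfolding aux_polytope_def by auto
  then have "polyhedron (aux_polytope r)"
    using finite_facet_normals by (auto intro!: polyhedron_Inter polyhedron_halfspace_le)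
  then show ?thesis using bounded_aux_polytope[OF r] polytope_eq_bounded_polyhedron by blast
qed

lemma aff_dim_aux_polytope:
  assumes r: "0 < r" shows "aff_dim (aux_polytope r) = int DIM('a)"
proof -
  obtain c where c: "c \<in> choices" using choices_nonempty by blast
  have "ball (shifted_apex r c) r \<subseteq> aux_polytope r"
  proof
    fix x assume x: "x \<in> ball (shifted_apex r c) r"
    have "u \<bullet> x \<le> aux_support r u" if u: "u \<in> facet_normals P" for u
    proof -
      have "u \<bullet> (x - shifted_apex r c) \<le> norm u * norm (x - shifted_apex r c)"
        by (rule norm_cauchy_schwarz)
      also have "\<dots> \<le> r"
        using x facet_normalsD(1)[OF u] by (simp add: dist_norm norm_minus_commute)
      finally show ?thesis
        using shifted_apex_le_aux_support[OF c, of u r] by (simp add: inner_diff_right)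
    qed
    then show "x \<in> aux_polytope r" unfolding aux_polytope_def by blast
  qed
  then have "interior (aux_polytope r) \<noteq> {}"
    using r interior_maximal[OF _ open_ball] centre_in_ball by blast
  then show ?thesis by (rule aff_dim_nonempty_interior)
qed

lemma aux_touching_point:
  assumes r: "0 < r" and u: "u \<in> facet_normals P"
  shows "\<exists>z. u \<bullet> z = aux_support r u \<and> (\<forall>v\<in>facet_normals P - {u}. v \<bullet> z < aux_support r v)"
proof -
  obtain c where c: "c \<in> choices" "aux_support r u = u \<bullet> shifted_apex r c + r"
    using ex_choice_aux_support by blast
  define z where "z = shifted_apex r c + r *\<^sub>R u"
  have "u \<bullet> u = 1" using facet_normalsD(1)[OF u] by (simp add: dot_square_norm)
  then have "u \<bullet> z = aux_support r u" using c(2) by (simp add: z_def inner_add_right)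
  moreover have "v \<bullet> z < aux_support r v" if v: "v \<in> facet_normals P - {u}" for v
  proof -
    have "v \<bullet> u < 1"
      using inner_lt_1_of_unit_vectors facet_normalsD(1) u v by blast
    then have "r * (v \<bullet> u) < r" using r by simp
    then show ?thesis
      using shifted_apex_le_aux_support[OF c(1), of v r] by (simp add: z_def inner_add_right)
  qed
  ultimately show ?thesis by blast
qed

lemma facet_normals_aux_polytope:
  assumes r: "0 < r" shows "facet_normals (aux_polytope r) = facet_normals P"
proof -
  have full: "aff_dim {z. \<forall>u\<in>facet_normals P. u \<bullet> z \<le> aux_support r u} = int DIM('a)"
    using aff_dim_aux_polytope[OF r] unfolding aux_polytope_def .
  have "({z. \<forall>u\<in>facet_normals P. u \<bullet> z \<le> aux_support r u} \<inter> {x. u \<bullet> x = aux_support r u})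
      facet_of {z. \<forall>u\<in>facet_normals P. u \<bullet> z \<le> aux_support r u}"
    if u: "u \<in> facet_normals P" for u
  proof -
    obtain z where "u \<bullet> z = aux_support r u" "\<forall>v\<in>facet_normals P - {u}. v \<bullet> z < aux_support r v"
      using aux_touching_point[OF r u] by blast
    then show ?thesis
      by (intro facet_normal_of_halfspace_Inter[OF finite_facet_normals facet_normalsD(1) full u]) auto
  qed
  then show ?thesis unfolding aux_polytope_def
    by (intro facet_normals_halfspace_Inter[OF finite_facet_normals facet_normalsD(1) full])
qed

lemma support_fn_aux_polytope:
  assumes r: "0 < r" and u: "u \<in> facet_normals P"
  shows "support_fn (aux_polytope r) u = aux_support r u"
proof -
  obtain z where z: "u \<bullet> z = aux_support r u" "\<forall>v\<in>facet_normals P - {u}. v \<bullet> z < aux_support r v"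
    using aux_touching_point[OF r u] by blast
  then have "z \<in> aux_polytope r" unfolding aux_polytope_def by (force simp: less_imp_le)
  then show ?thesis using z(1) u by (intro support_fn_eqI) (auto simp: aux_polytope_def)
qed

text \<open>The last condition forces every skeleton normal in the cone coefficients of a facet
  active at a point of the auxiliary polytope to be nearly tight there.\<close>
definition admissible_radius :: "real \<Rightarrow> bool" where
  "admissible_radius r \<longleftrightarrow> 0 < r \<and> r \<le> min_block_slack \<and>
     (\<forall>u\<in>facet_normals P. \<forall>y. 0 < coeff u y \<longrightarrow>
        r * (\<Sum>y\<in>skeleton_normals. coeff u y) \<le> min_block_slack * coeff u y)"

lemma ex_admissible_radius: "\<exists>r. admissible_radius r"
proof -
  define S where "S = {(u, y). u \<in> facet_normals P \<and> y \<in> skeleton_normals \<and> 0 < coeff u y}"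
  have "finite S"
    by (rule finite_subset[of _ "facet_normals P \<times> skeleton_normals"])
      (auto simp: S_def finite_facet_normals finite_skeleton_normals)
  moreover have sum_pos: "1 \<le> (\<Sum>y\<in>skeleton_normals. coeff u y)" if "u \<in> facet_normals P" for u
    using norm_le_sum_coeff[of u] facet_normalsD(1)[OF that] by simp
  ultimately obtain d where d: "d > 0"
    "\<forall>(u, y)\<in>S. d \<le> min_block_slack * coeff u y / (\<Sum>y\<in>skeleton_normals. coeff u y)"
    using finite_pos_lower_bound[of S "\<lambda>(u, y). min_block_slack * coeff u y / (\<Sum>y\<in>skeleton_normals. coeff u y)"]
      min_block_slack_pos by (force simp: S_def)
  have "admissible_radius (min d min_block_slack)"
    unfolding admissible_radius_def
  proof (intro conjI ballI allI impI)
    fix u y assume u: "u \<in> facet_normals P" and y: "0 < coeff u y"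
    then have "y \<in> skeleton_normals" using coeff_nonzero_skeleton[of u y] by simp
    then have "min d min_block_slack \<le> min_block_slack * coeff u y / (\<Sum>y\<in>skeleton_normals. coeff u y)"
      using d(2) u y unfolding S_def by fastforce
    then show "min d min_block_slack * (\<Sum>y\<in>skeleton_normals. coeff u y) \<le> min_block_slack * coeff u y"
      using sum_pos[OF u] by (simp add: pos_le_divide_eq)
  qed (use d(1) min_block_slack_pos in auto)
  then show ?thesis by blast
qed

lemma aux_active_slack_lt:
  assumes r: "admissible_radius r" and x: "x \<in> aux_polytope r"
    and u: "u \<in> facet_normals P" and active: "u \<bullet> x = aux_support r u" and y: "0 < coeff u y"
  shows "support_fn P y - y \<bullet> x < min_block_slack"
proof -
  have r_le: "r \<le> min_block_slack" and "0 < r" using r by (auto simp: admissible_radius_def)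
  have y_skel: "y \<in> skeleton_normals" using y coeff_nonzero_skeleton[of u y] by simp
  have slack_nonneg: "0 \<le> support_fn P y' - y' \<bullet> x" if "y' \<in> skeleton_normals" for y'
    using x that skeleton_normals_subset aux_support_skeleton[OF r_le that]
    unfolding aux_polytope_def by fastforce
  have "coeff u y * (support_fn P y - y \<bullet> x)
      \<le> (\<Sum>y'\<in>skeleton_normals. coeff u y' * (support_fn P y' - y' \<bullet> x))"
    using y_skel slack_nonneg coeff(2) finite_skeleton_normals by (intro member_le_sum) auto
  also have "\<dots> = cone_support u - u \<bullet> x"
    by (simp add: cone_support_def inner_coeff[of u x] right_diff_distrib sum_subtractf)
  also have "\<dots> = r * (\<Sum>y\<in>skeleton_normals. coeff u y) - r"
    using aux_support_eq[OF r_le, of u] active by simp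
  also have "\<dots> < min_block_slack * coeff u y"
    using r u y \<open>0 < r\<close> unfolding admissible_radius_def by fastforce
  finally show ?thesis using y by (simp add: mult.commute)
qed

lemma aux_polytope_active_apex:
  assumes r: "admissible_radius r" and x: "x \<in> aux_polytope r"
  shows "\<exists>c\<in>choices. \<forall>u\<in>facet_normals P.
    u \<bullet> x = aux_support r u \<longrightarrow> aux_support r u \<le> u \<bullet> apex (support_fn P) c"
proof -
  have "\<forall>i\<in>{..<k}. \<exists>y. y \<in> Xs i \<and> min_block_slack \<le> support_fn P y - y \<bullet> x"
    using ex_large_slack_in_block by blast
  then obtain C where C: "\<And>i. i < k \<Longrightarrow> C i \<in> Xs i \<and> min_block_slack \<le> support_fn P (C i) - C i \<bullet> x"
    using bchoice[of "{..<k}"] by (metis lessThan_iff)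
  define c where "c = restrict C {..<k}"
  have c: "c \<in> choices" unfolding c_def choices_def using C by auto
  have "aux_support r u \<le> u \<bullet> apex (support_fn P) c"
    if u: "u \<in> facet_normals P" and active: "u \<bullet> x = aux_support r u" for u
  proof -
    have "y \<in> choice_basis c" if y: "coeff u y \<noteq> 0" for y
    proof -
      have "0 < coeff u y" using y coeff(2)[of u y] by simp
      then have "support_fn P y - y \<bullet> x < min_block_slack"
        using aux_active_slack_lt[OF r x u active] by blast
      moreover obtain i where i: "i < k" "y \<in> Xs i"
        using coeff_nonzero_skeleton[OF y] unfolding skeleton_normals_def by blast
      ultimately have "y \<noteq> c i" using C unfolding c_def by force
      then show ?thesis using i unfolding choice_basis_def by blast
    qed
    then have "u \<bullet> apex (support_fn P) c = cone_support u"
      unfolding cone_support_def by (rule inner_apex_eq_coeff_sum[OF c])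
    moreover have "1 \<le> (\<Sum>y\<in>skeleton_normals. coeff u y)"
      using norm_le_sum_coeff[of u] facet_normalsD(1)[OF u] by simp
    ultimately show ?thesis
      using aux_support_eq[of r u] r by (auto simp: admissible_radius_def)
  qed
  then show ?thesis using c by blast
qed

end

section \<open>Transfer by strong monotypicity and the covering\<close>

definition covector :: "'a::euclidean_space set \<Rightarrow> 'a \<Rightarrow> 'a \<Rightarrow> real" where
  "covector S z = (\<lambda>u. if u \<in> facet_normals S then sgn (u \<bullet> z - support_fn S u) else 0)"

lemma covector_apply: "u \<in> facet_normals S \<Longrightarrow> covector S z u = sgn (u \<bullet> z - support_fn S u)"
  by (simp add: covector_def)

lemma arrangement_covectors_eq_range: "arrangement_covectors S = range (covector S)"
  unfolding arrangement_covectors_def covector_def by auto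

locale strongly_monotypic_skeleton = skeleton +
  assumes strongly_monotypic: "strongly_monotypic P"
begin

lemma covector_aux_polytope:
  assumes "0 < r" and "u \<in> facet_normals P"
  shows "covector (aux_polytope r) z u = sgn (u \<bullet> z - aux_support r u)"
  using covector_apply[of u "aux_polytope r" z] facet_normals_aux_polytope[OF assms(1)]
    support_fn_aux_polytope[OF assms] assms(2) by simp

lemma arrangement_covectors_aux_polytope:
  assumes r: "admissible_radius r"
  shows "range (covector (aux_polytope r)) = range (covector P)"
proof -
  have "0 < r" "r \<le> min_block_slack" using r by (auto simp: admissible_radius_def)
  then have "arrangement_covectors (aux_polytope r) = arrangement_covectors P"
    using strongly_monotypic polytope_aux_polytope aff_dim_aux_polytope facet_normals_aux_polytope
    unfolding strongly_monotypic_def by blast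
  then show ?thesis by (simp add: arrangement_covectors_eq_range)
qed

lemma ex_same_covector_in_aux:
  assumes r: "admissible_radius r"
  shows "\<exists>x'. \<forall>u\<in>facet_normals P. sgn (u \<bullet> x - support_fn P u) = sgn (u \<bullet> x' - aux_support r u)"
proof -
  have "covector P x \<in> range (covector (aux_polytope r))"
    using arrangement_covectors_aux_polytope[OF r] by blast
  then obtain x' where x': "covector P x = covector (aux_polytope r) x'" by blast
  have "sgn (u \<bullet> x - support_fn P u) = sgn (u \<bullet> x' - aux_support r u)"
    if u: "u \<in> facet_normals P" for u
    using fun_cong[OF x', of u] covector_apply[OF u] covector_aux_polytope[OF _ u] r
    by (simp add: admissible_radius_def)
  then show ?thesis by blast
qed

text \<open>The apex of a choice lies on the facet hyperplanes of its basis normals in both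
  arrangements, and is determined by them; hence its sign vector is the same in both.\<close>
lemma sgn_apex_aux_support:
  assumes r: "admissible_radius r" and c: "c \<in> choices" and u: "u \<in> facet_normals P"
  shows "sgn (u \<bullet> apex (support_fn P) c - aux_support r u) = sgn (u \<bullet> apex (support_fn P) c - support_fn P u)"
proof -
  let ?w = "apex (support_fn P) c"
  have r_le: "r \<le> min_block_slack" using r by (simp add: admissible_radius_def)
  have "covector (aux_polytope r) ?w \<in> range (covector P)"
    using arrangement_covectors_aux_polytope[OF r] by blast
  then obtain q where q: "covector (aux_polytope r) ?w = covector P q" by blast
  have sgn_eq: "sgn (v \<bullet> ?w - aux_support r v) = sgn (v \<bullet> q - support_fn P v)"
    if "v \<in> facet_normals P" for v
    using fun_cong[OF q, of v] covector_apply[OF that] covector_aux_polytope[OF _ that] r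
    by (simp add: admissible_radius_def)
  have "y \<bullet> q = support_fn P y" if y: "y \<in> choice_basis c" for y
  proof -
    have "y \<in> skeleton_normals" using y choice_basis_subset by blast
    then have "sgn (y \<bullet> ?w - aux_support r y) = 0"
      using apex[OF c y] aux_support_skeleton[OF r_le] by simp
    then show ?thesis
      using sgn_eq[of y] y choice_basis_subset skeleton_normals_subset by (auto simp: sgn_eq_0_iff)
  qed
  then have "q = ?w" using apex_eqI[OF c] by metis
  then show ?thesis using sgn_eq[OF u] by simp
qed

lemma active_facets_apex:
  assumes x: "x \<in> P"
  shows "\<exists>c\<in>choices. \<forall>u\<in>facet_normals P.
    u \<bullet> x = support_fn P u \<longrightarrow> support_fn P u \<le> u \<bullet> apex (support_fn P) c"
proof -
  obtain r where r: "admissible_radius r" using ex_admissible_radius by blast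
  obtain x' where x': "\<forall>u\<in>facet_normals P. sgn (u \<bullet> x - support_fn P u) = sgn (u \<bullet> x' - aux_support r u)"
    using ex_same_covector_in_aux[OF r] by blast
  have "u \<bullet> x' \<le> aux_support r u" if u: "u \<in> facet_normals P" for u
  proof -
    have "sgn (u \<bullet> x - support_fn P u) \<le> 0"
      using facet_normalsD(2)[OF u x] by (simp add: sgn_le_0_iff)
    then show ?thesis using x'[rule_format, OF u] by (simp add: sgn_le_0_iff)
  qed
  then have "x' \<in> aux_polytope r" unfolding aux_polytope_def by blast
  then obtain c where c: "c \<in> choices" and apex_c: "\<forall>u\<in>facet_normals P.
      u \<bullet> x' = aux_support r u \<longrightarrow> aux_support r u \<le> u \<bullet> apex (support_fn P) c"
    using aux_polytope_active_apex[OF r] by blast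
  have "support_fn P u \<le> u \<bullet> apex (support_fn P) c"
    if u: "u \<in> facet_normals P" and active: "u \<bullet> x = support_fn P u" for u
  proof -
    have "u \<bullet> x' = aux_support r u" using x'[rule_format, OF u] active by (simp add: sgn_eq_0_iff)
    then have "0 \<le> sgn (u \<bullet> apex (support_fn P) c - aux_support r u)"
      using apex_c u by (simp add: zero_le_sgn_iff)
    then show ?thesis using sgn_apex_aux_support[OF r c u] by (simp add: zero_le_sgn_iff)
  qed
  then show ?thesis using c by blast
qed

definition loose_normals :: "(nat \<Rightarrow> 'a) \<Rightarrow> 'a set" where
  "loose_normals c = {u \<in> facet_normals P. u \<bullet> apex (support_fn P) c < support_fn P u}"

lemma ex_uniform_margin:
  "\<exists>\<eta>>0. \<forall>z\<in>P. \<exists>c\<in>choices. \<forall>u\<in>loose_normals c. u \<bullet> z + \<eta> \<le> support_fn P u"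
proof (rule compact_strict_halfspace_cover_margin)
  show "compact P" using polytope_imp_compact[OF polytope] .
  show "finite (loose_normals c)" for c
    using finite_facet_normals unfolding loose_normals_def by simp
  fix z assume z: "z \<in> P"
  then obtain c where "c \<in> choices" and c: "\<forall>u\<in>facet_normals P.
      u \<bullet> z = support_fn P u \<longrightarrow> support_fn P u \<le> u \<bullet> apex (support_fn P) c"
    using active_facets_apex by blast
  moreover have "u \<bullet> z < support_fn P u" if "u \<in> loose_normals c" for u
    using that c facet_normalsD(2)[OF _ z] unfolding loose_normals_def by fastforce
  ultimately show "\<exists>c\<in>choices. \<forall>u\<in>loose_normals c. u \<bullet> z < support_fn P u" by blast
qed

lemma homothetic_cover:
  "\<exists>e>0. e < 1 \<and> P \<subseteq> (\<Union>c\<in>choices. (\<lambda>x. e *\<^sub>R apex (support_fn P) c + (1 - e) *\<^sub>R x) ` P)"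
proof -
  obtain \<eta> where \<eta>: "\<eta> > 0"
    "\<forall>z\<in>P. \<exists>c\<in>choices. \<forall>u\<in>loose_normals c. u \<bullet> z + \<eta> \<le> support_fn P u"
    using ex_uniform_margin by blast
  obtain M where M: "\<forall>(c, u)\<in>choices \<times> facet_normals P. support_fn P u - u \<bullet> apex (support_fn P) c \<le> M"
    using bdd_above_finite[of "(\<lambda>(c, u). support_fn P u - u \<bullet> apex (support_fn P) c) ` (choices \<times> facet_normals P)"]
      finite_choices finite_facet_normals unfolding bdd_above_def by auto
  define e where "e = min (1/2) (\<eta> / (\<bar>M\<bar> + 1))"
  have e: "0 < e" "e < 1" using \<eta>(1) by (auto simp: e_def)
  have "e \<le> \<eta> / (\<bar>M\<bar> + 1)" by (simp add: e_def)
  then have e_M: "e * (\<bar>M\<bar> + 1) \<le> \<eta>" by (simp add: pos_le_divide_eq)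
  have "z \<in> (\<Union>c\<in>choices. (\<lambda>x. e *\<^sub>R apex (support_fn P) c + (1 - e) *\<^sub>R x) ` P)" if z: "z \<in> P" for z
  proof -
    obtain c where c: "c \<in> choices" "\<forall>u\<in>loose_normals c. u \<bullet> z + \<eta> \<le> support_fn P u"
      using \<eta>(2) z by blast
    have "e * (support_fn P u - u \<bullet> apex (support_fn P) c) \<le> support_fn P u - u \<bullet> z"
      if u: "u \<in> facet_normals P" for u
    proof (cases "u \<in> loose_normals c")
      case True
      have "support_fn P u - u \<bullet> apex (support_fn P) c \<le> \<bar>M\<bar> + 1" using M c(1) u by fastforce
      then have "e * (support_fn P u - u \<bullet> apex (support_fn P) c) \<le> e * (\<bar>M\<bar> + 1)"
        using e(1) by (intro mult_left_mono) auto
      then show ?thesis using e_M c(2) True by fastforce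
    next
      case False
      then have "e * (support_fn P u - u \<bullet> apex (support_fn P) c) \<le> 0"
        using e(1) u unfolding loose_normals_def by (simp add: mult_nonneg_nonpos)
      then show ?thesis using facet_normalsD(2)[OF u z] by linarith
    qed
    then have "z \<in> (\<lambda>x. e *\<^sub>R apex (support_fn P) c + (1 - e) *\<^sub>R x) ` P"
      by (rule homothetic_image_memI[OF less_imp_le[OF e(1)] e(2) z])
    then show ?thesis using c(1) by blast
  qed
  then show ?thesis using e by blast
qed

end

theorem theorem1p4:
  fixes P :: "'a::euclidean_space set" and k :: nat and Xs :: "nat \<Rightarrow> 'a set"
  assumes "polytope P" and "aff_dim P = int DIM('a)"
    and "strongly_monotypic P"
    and "is_skeleton (facet_normals P) k Xs"
  shows "(\<Prod>i<k. card (Xs i)) \<le> 2 ^ DIM('a) \<and>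
    (\<exists>\<epsilon>>0. \<epsilon> < 1 \<and> (\<exists>T. finite T \<and> card T \<le> (\<Prod>i<k. card (Xs i)) \<and>
            P \<subseteq> (\<Union>t\<in>T. (\<lambda>x. t + (1 - \<epsilon>) *\<^sub>R x) ` P)))"
proof -
  interpret strongly_monotypic_skeleton P k Xs
    by unfold_locales (use assms in auto)
  obtain e where e: "0 < e" "e < 1"
    and cover: "P \<subseteq> (\<Union>c\<in>choices. (\<lambda>x. e *\<^sub>R apex (support_fn P) c + (1 - e) *\<^sub>R x) ` P)"
    using homothetic_cover by blast
  define T where "T = (\<lambda>c. e *\<^sub>R apex (support_fn P) c) ` choices"
  have "finite T" unfolding T_def using finite_choices by simp
  moreover have "card T \<le> (\<Prod>i<k. card (Xs i))"
    unfolding T_def card_choices[symmetric] using finite_choices by (rule card_image_le)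
  moreover have "P \<subseteq> (\<Union>t\<in>T. (\<lambda>x. t + (1 - e) *\<^sub>R x) ` P)"
    using cover unfolding T_def by blast
  ultimately show ?thesis using prod_card_blocks_le e by blast
qed

end
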